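(* Let $\mathbb G=V_1\times V_2$ be a step-two Carnot group and $f\in\mathcal A_h(\mathbb G)$. Then $f$ is $[V_1,V_1]$-affine, i.e. for every $(x,z)\in\mathbb G$ and every $y,y'\in V_1$, the map $t\in\mathbb R\mapsto f((x,z)\cdot(0,t[y,y']))=f(x,z+t[y,y'])$ is affine.
   Context: A step-two Carnot group is $\mathbb G=V_1\times V_2$, where $V_1,V_2$ are finite-dimensional real vector spaces with $V_2\neq\{0\}$, equipped with a bilinear skew-symmetric map $[\cdot,\cdot]:V_1\times V_1\to V_2$ with $\operatorname{span}\{[x,x']:x,x'\in V_1\}=V_2$, and group law $(x,z)\cdot(x',z')=(x+x',z+z'+[x,x'])$. $[V_1,V_1]:=\{[x,x']:x,x'\in V_1\}$ (identified with $\{0\}\times[V_1,V_1]$). $\mathcal A_h(\mathbb G)$ is the space of $h$-affine maps $f:\mathbb G\to\mathbb R$, i.e. such that for all $(x,z)\in\mathbb G$, $y\in V_1$, $t\mapsto f((x,z)\cdot(ty,0))$ is affine. *)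

theory Defs
  imports "HOL-Analysis.Analysis"
begin

text \<open>A step-two Carnot group G = V1 x V2, with V1, V2 finite-dimensional real vector
  spaces (modelled by euclidean_space types, which are nonzero), and a bilinear skew-symmetric
  bracket whose image spans V2.\<close>

definition step_two_carnot :: "('a::euclidean_space \<Rightarrow> 'a \<Rightarrow> 'b::euclidean_space) \<Rightarrow> bool" where
  "step_two_carnot br \<longleftrightarrow>
     bilinear br \<and> (\<forall>x x'. br x x' = - br x' x) \<and>
     span {br x x' | x x'. True} = UNIV"

definition carnot_mult :: "('a::euclidean_space \<Rightarrow> 'a \<Rightarrow> 'b::euclidean_space) \<Rightarrow> 'a \<times> 'b \<Rightarrow> 'a \<times> 'b \<Rightarrow> 'a \<times> 'b" where
  "carnot_mult br p q = (fst p + fst q, snd p + snd q + br (fst p) (fst q))"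

definition affine_real_fun :: "(real \<Rightarrow> real) \<Rightarrow> bool" where
  "affine_real_fun g \<longleftrightarrow> (\<exists>a b. \<forall>t. g t = a * t + b)"

definition h_affine :: "('a::euclidean_space \<Rightarrow> 'a \<Rightarrow> 'b::euclidean_space) \<Rightarrow> ('a \<times> 'b \<Rightarrow> real) \<Rightarrow> bool" where
  "h_affine br f \<longleftrightarrow> (\<forall>p y. affine_real_fun (\<lambda>t. f (carnot_mult br p (t *\<^sub>R y, 0))))"

end

theory Submission
  imports Defs
begin

text \<open>An h-affine function satisfies the midpoint identity
  f(q(u,0)) + f(q(-u,0)) = 2 f(q) along horizontal lines. For q = (x,z)(0,t[y,y']) and
  u = y + ty', bilinearity gives q(\<plusminus>u,0) = ((x,z)(\<plusminus>y,0))(\<plusminus>ty',0), so f(q) is the average of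
  the two affine functions t \<mapsto> f(((x,z)(y,0))(ty',0)) and t \<mapsto> f(((x,z)(-y,0))(-ty',0)).\<close>

lemma affine_real_fun_add:
  assumes "affine_real_fun g" and "affine_real_fun h"
  shows "affine_real_fun (\<lambda>t. g t + h t)"
proof -
  obtain a b c d where "\<And>t. g t = a * t + b" and "\<And>t. h t = c * t + d"
    using assms unfolding affine_real_fun_def by blast
  then have "\<And>t. g t + h t = (a + c) * t + (b + d)"
    by (simp add: algebra_simps)
  then show ?thesis
    unfolding affine_real_fun_def by blast
qed

lemma affine_real_fun_cmult:
  assumes "affine_real_fun g"
  shows "affine_real_fun (\<lambda>t. c * g t)"
proof -
  obtain a b where "\<And>t. g t = a * t + b"
    using assms unfolding affine_real_fun_def by blast
  then have "\<And>t. c * g t = (c * a) * t + c * b"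
    by (simp add: algebra_simps)
  then show ?thesis
    unfolding affine_real_fun_def by blast
qed

lemma affine_real_fun_midpoint:
  assumes "affine_real_fun g"
  shows "g 1 + g (-1) = 2 * g 0"
  using assms unfolding affine_real_fun_def by auto

lemma carnot_mult_zero_right:
  "bilinear br \<Longrightarrow> carnot_mult br p (0, 0) = p"
  by (simp add: carnot_mult_def bilinear_rzero)

lemma carnot_mult_horizontal_split:
  assumes "bilinear br"
  shows "carnot_mult br (carnot_mult br p (y, 0)) (t *\<^sub>R y', 0)
       = carnot_mult br (carnot_mult br p (0, t *\<^sub>R br y y')) (y + t *\<^sub>R y', 0)"
  using assms
  by (simp add: carnot_mult_def bilinear_ladd bilinear_radd bilinear_rmul bilinear_lzero
      bilinear_rzero algebra_simps)

lemma h_affine_midpoint: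
  assumes "bilinear br" and "h_affine br f"
  shows "f (carnot_mult br p (u, 0)) + f (carnot_mult br p (-u, 0)) = 2 * f p"
proof -
  have "affine_real_fun (\<lambda>t. f (carnot_mult br p (t *\<^sub>R u, 0)))"
    using assms(2) unfolding h_affine_def by blast
  from affine_real_fun_midpoint[OF this] show ?thesis
    using carnot_mult_zero_right[OF assms(1)] by simp
qed

theorem proposition3p1:
  fixes br :: "'a::euclidean_space \<Rightarrow> 'a \<Rightarrow> 'b::euclidean_space"
    and f :: "'a \<times> 'b \<Rightarrow> real"
  assumes "step_two_carnot br"
    and "h_affine br f"
  shows "\<forall>x z y y'. affine_real_fun (\<lambda>t. f (carnot_mult br (x, z) (0, t *\<^sub>R br y y')))"
proof (intro allI)
  fix x :: 'a and z :: 'b and y y' :: 'a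
  have bl: "bilinear br"
    using assms(1) by (simp add: step_two_carnot_def)
  let ?p = "(x, z)"
  let ?g = "\<lambda>t. f (carnot_mult br (carnot_mult br ?p (y, 0)) (t *\<^sub>R y', 0))"
  let ?h = "\<lambda>t. f (carnot_mult br (carnot_mult br ?p (-y, 0)) (t *\<^sub>R -y', 0))"
  have average: "f (carnot_mult br ?p (0, t *\<^sub>R br y y')) = 1/2 * (?g t + ?h t)" for t
  proof -
    let ?q = "carnot_mult br ?p (0, t *\<^sub>R br y y')" and ?u = "y + t *\<^sub>R y'"
    have "br (-y) (-y') = br y y'"
      using bl by (simp add: bilinear_lneg bilinear_rneg)
    moreover have "-y + t *\<^sub>R -y' = - ?u"
      by (simp add: algebra_simps)
    ultimately have "carnot_mult br ?q (- ?u, 0)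
        = carnot_mult br (carnot_mult br ?p (-y, 0)) (t *\<^sub>R -y', 0)"
      using carnot_mult_horizontal_split[OF bl, of ?p "-y" t "-y'"] by simp
    moreover have "carnot_mult br ?q (?u, 0)
        = carnot_mult br (carnot_mult br ?p (y, 0)) (t *\<^sub>R y', 0)"
      using carnot_mult_horizontal_split[OF bl, of ?p y t y'] by simp
    ultimately show ?thesis
      using h_affine_midpoint[OF bl assms(2), of ?q ?u] by simp
  qed
  have "affine_real_fun ?g" and "affine_real_fun ?h"
    using assms(2) unfolding h_affine_def by blast+
  then show "affine_real_fun (\<lambda>t. f (carnot_mult br ?p (0, t *\<^sub>R br y y')))"
    unfolding average by (intro affine_real_fun_cmult affine_real_fun_add)
qed

end
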